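(* Let $\mathcal{X}$ be a set with $|\mathcal{X}|\ge2$ and $\mathcal{D}$ the class of all finite multisets with elements drawn from $\mathcal{X}$. Let $d\colon\mathcal{X}\times\mathcal{X}\to[0,1]$ be a normalized distance and, for $x\in D$, let $\mathrm{avg}(x,D)=\frac{1}{|D|}\sum_{z\in D}d(x,z)$ (sum with multiplicity). For $K\in(0,1)\cap\mathbb{Q}$, consider the deterministic suppression algorithm $\mathcal{S}_K(D)=\{x\in D\mid\mathrm{avg}(x,D)\le K\}$ (as a sub-multiset of $D$). Then $\Delta_{\mathcal{D}}\mathcal{S}_K=\infty$.
   Context: A normalized distance is a metric $d$ on $\mathcal{X}$ with values in $[0,1]$ and $\sup_{x,y\in\mathcal{X}}d(x,y)=1$. Two databases are (unbounded) neighboring if one is obtained from the other by adding exactly one record. For a deterministic suppression algorithm $\mathcal{S}$ (a map sending each database $D$ to a sub-multiset of $D$), its sensitivity is $\Delta_{\mathcal{D}}\mathcal{S}=\sup_{D,D'\in\mathcal{D}\text{ neighboring}}|\mathcal{S}(D)\,\Delta\,\mathcal{S}(D')|$, where $\Delta$ is multiset symmetric difference. *)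

theory Defs
  imports Complex_Main "HOL-Library.Multiset" "HOL-Library.Extended_Nat"
begin

definition normalized_distance :: "'a set \<Rightarrow> ('a \<Rightarrow> 'a \<Rightarrow> real) \<Rightarrow> bool" where
  "normalized_distance X d \<longleftrightarrow>
     (\<forall>x\<in>X. \<forall>y\<in>X. 0 \<le> d x y \<and> d x y \<le> 1 \<and> (d x y = 0 \<longleftrightarrow> x = y) \<and> d x y = d y x) \<and>
     (\<forall>x\<in>X. \<forall>y\<in>X. \<forall>z\<in>X. d x z \<le> d x y + d y z) \<and>
     (SUP p\<in>X \<times> X. d (fst p) (snd p)) = 1"

definition databases :: "'a set \<Rightarrow> 'a multiset set" where
  "databases X = {D. set_mset D \<subseteq> X}"

definition avg :: "('a \<Rightarrow> 'a \<Rightarrow> real) \<Rightarrow> 'a \<Rightarrow> 'a multiset \<Rightarrow> real" where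
  "avg d x D = (\<Sum>z\<in>#D. d x z) / real (size D)"

definition suppress :: "('a \<Rightarrow> 'a \<Rightarrow> real) \<Rightarrow> real \<Rightarrow> 'a multiset \<Rightarrow> 'a multiset" where
  "suppress d K D = filter_mset (\<lambda>x. avg d x D \<le> K) D"

definition neighboring :: "'a set \<Rightarrow> 'a multiset \<Rightarrow> 'a multiset \<Rightarrow> bool" where
  "neighboring X D D' \<longleftrightarrow> D \<in> databases X \<and> D' \<in> databases X \<and>
     (\<exists>x\<in>X. D' = D + {#x#} \<or> D = D' + {#x#})"

definition sensitivity :: "'a set \<Rightarrow> ('a multiset \<Rightarrow> 'a multiset) \<Rightarrow> enat" where
  "sensitivity X S = (SUP p\<in>{(D, D'). neighboring X D D'}.
      enat (size ((S (fst p) - S (snd p)) + (S (snd p) - S (fst p)))))"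

end

theory Submission
  imports Defs
begin

text \<open>Since the distances reach up to 1 > K, there are points a, b with K < d a b. Take D to
  be m copies of a plus as many copies of b as possible while keeping avg(a, D) \<le> K; then all
  m copies of a survive in S_K(D), whereas adding one more b pushes avg(a, -) above K and
  suppresses all of them. So neighbouring databases can differ in m suppressed records for
  every m.\<close>

lemma normalized_distance_exceeds:
  assumes "normalized_distance X d" and "X \<noteq> {}" and "K < 1"
  obtains a b where "a \<in> X" and "b \<in> X" and "K < d a b"
proof -
  have "bdd_above ((\<lambda>p. d (fst p) (snd p)) ` (X \<times> X))"
    using assms(1) unfolding normalized_distance_def by (intro bdd_aboveI[of _ 1]) auto
  moreover have "K < (SUP p\<in>X \<times> X. d (fst p) (snd p))"
    using assms(1,3) unfolding normalized_distance_def by simp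
  moreover have "X \<times> X \<noteq> {}"
    using assms(2) by simp
  ultimately obtain p where "p \<in> X \<times> X" and "K < d (fst p) (snd p)"
    using less_cSUP_iff[of "X \<times> X" "\<lambda>p. d (fst p) (snd p)" K] by blast
  then show thesis
    using that by auto
qed

lemma nat_pred_switches_on:
  fixes P :: "nat \<Rightarrow> bool"
  assumes "\<not> P 0" and "P N"
  obtains n where "\<not> P n" and "P (Suc n)"
  using assms by (induction N) auto

lemma exists_threshold_count:
  fixes K \<delta> :: real and m :: nat
  assumes "0 < K" and "K < \<delta>"
  obtains n where "real n * \<delta> / real (m + n) \<le> K"
    and "K < real (Suc n) * \<delta> / real (m + Suc n)"
proof -
  obtain N where N: "K * real m < real N * (\<delta> - K)"
    using reals_Archimedean3[of "\<delta> - K"] assms(2) by auto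
  have "m + N \<noteq> 0"
    using N assms(1) by (auto simp: mult_less_0_iff)
  then have "0 < real (m + N)"
    by (simp del: of_nat_add)
  with N have "K < real N * \<delta> / real (m + N)"
    by (simp add: pos_less_divide_eq algebra_simps)
  then obtain n where "\<not> K < real n * \<delta> / real (m + n)"
    and "K < real (Suc n) * \<delta> / real (m + Suc n)"
    using nat_pred_switches_on[of "\<lambda>n. K < real n * \<delta> / real (m + n)" N] assms(1)
    by auto
  then show thesis
    using that by (simp add: not_less)
qed

lemma avg_replicate:
  assumes "d a a = 0"
  shows "avg d a (replicate_mset m a + replicate_mset n b) = real n * d a b / real (m + n)"
  by (simp add: avg_def assms)

lemma size_suppress_diff_ge:
  assumes "avg d a D \<le> K" and "\<not> avg d a (D + {#b#}) \<le> K"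
  shows "count D a \<le>
    size ((suppress d K D - suppress d K (D + {#b#})) + (suppress d K (D + {#b#}) - suppress d K D))"
    (is "_ \<le> size ?M")
proof -
  have "count (suppress d K D) a = count D a" and "count (suppress d K (D + {#b#})) a = 0"
    using assms by (auto simp: suppress_def count_filter_mset)
  then have "count D a \<le> count ?M a"
    by simp
  also have "\<dots> \<le> size ?M"
    by (rule count_le_size)
  finally show ?thesis .
qed

lemma sensitivity_infinite:
  assumes "\<And>k. \<exists>D D'. neighboring X D D' \<and> k < size ((S D - S D') + (S D' - S D))"
  shows "sensitivity X S = \<infinity>"
  unfolding sensitivity_def top_enat_def [symmetric] SUP_eq_top_iff
proof (intro allI impI)
  fix x :: enat
  assume "x < top"
  then obtain k where "x = enat k"
    by (cases x) auto
  with assms[of k] show "\<exists>p\<in>{(D, D'). neighboring X D D'}.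
      x < enat (size ((S (fst p) - S (snd p)) + (S (snd p) - S (fst p))))"
    by fastforce
qed

theorem proposition2:
  fixes X :: "'a set" and d :: "'a \<Rightarrow> 'a \<Rightarrow> real" and K :: real
  assumes "\<exists>a\<in>X. \<exists>b\<in>X. a \<noteq> b"
    and "normalized_distance X d"
    and "K \<in> \<rat>" and "0 < K" and "K < 1"
  shows "sensitivity X (suppress d K) = \<infinity>"
proof (rule sensitivity_infinite)
  fix k
  obtain a b where "a \<in> X" "b \<in> X" and Kab: "K < d a b"
    using normalized_distance_exceeds[OF assms(2)] assms(1,5) by blast
  have daa: "d a a = 0"
    using assms(2) \<open>a \<in> X\<close> unfolding normalized_distance_def by blast
  obtain n where below: "real n * d a b / real (Suc k + n) \<le> K"
    and above: "K < real (Suc n) * d a b / real (Suc k + Suc n)"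
    using exists_threshold_count[OF assms(4) Kab] by blast
  define D where "D = replicate_mset (Suc k) a + replicate_mset n b"
  have "D + {#b#} = replicate_mset (Suc k) a + replicate_mset (Suc n) b"
    by (simp add: D_def)
  then have "avg d a D \<le> K" and "\<not> avg d a (D + {#b#}) \<le> K"
    using below above by (simp_all only: D_def avg_replicate[of d a, OF daa] not_le)
  then have "Suc k \<le> size ((suppress d K D - suppress d K (D + {#b#})) +
      (suppress d K (D + {#b#}) - suppress d K D))"
    using size_suppress_diff_ge[of d a D K b] by (simp add: D_def)
  moreover have "neighboring X D (D + {#b#})"
    using \<open>a \<in> X\<close> \<open>b \<in> X\<close> by (auto simp: neighboring_def databases_def D_def)
  ultimately show "\<exists>D D'. neighboring X D D' \<and>
      k < size ((suppress d K D - suppress d K D') + (suppress d K D' - suppress d K D))"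
    by (metis Suc_le_eq)
qed

end
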